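(* Fix $1<p<\infty$. Fix natural numbers $l_1,\dots,l_d$, $0<\mu<1$, $\lambda,\Theta>0$, and $M>\lambda/\Theta$. Then for any $0<\eta_1<1$ there exists $0<\eta<\eta_1$ with the following property. Suppose $l_{d+1}$ is a natural number, $L=\prod_{i=1}^{d+1}l_i$, $T=\bigcup_{i=0}^{d+1}\Lambda_i$ is an $(l_1,\dots,l_{d+1})$ interval tree, and $(r_I)_{I\in T},(s_I)_{I\in T}$ are non-negative numbers such that (i) for each $I\in T$, $r_I\le\lambda s_I$; (ii) for each $I\in T\setminus\Lambda_{d+1}$, $r_I\le\sum_{J^-=I}r_J$ and $s_I\le\sum_{J^-=I}s_J$; (iii) for each $I\in\Lambda_d$, $r_I^p\le(1+\eta)\Theta^p l_{d+1}^{p-1}\sum_{J^-=I}s_J^p$; (iv) $r_{[L]}^p>(1-\eta)\Theta^p\bigl(\prod_{i=1}^{d+1}l_i^{p-1}\bigr)\sum_{I\in\Lambda_{d+1}}s_I^p$. Then for any $0\le j\le d$, $\max_{I\in\Lambda_j}s_I\le M\min_{I\in\Lambda_j}s_I$, and for any $0\le i<d$ and $I_1\in\Lambda_i$, $r_{I_1}^p>(1-\mu)l_{i+1}^{p-1}\sum_{J^-=I_1}r_J^p$.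
   Context: $[n]=\{1,\dots,n\}$. Given natural numbers $l_1,\dots,l_{k}$ with $L=\prod_{j=1}^{k}l_j$, an $(l_1,\dots,l_k)$ interval tree $T=\bigcup_{i=0}^k\Lambda_i$ is built as follows: $\Lambda_0=\{[L]\}$; if $\Lambda_i$ ($i<k$) consists of pairwise disjoint integer subintervals of $[L]$ each of cardinality $\prod_{j=i+1}^k l_j$, then each $I\in\Lambda_i$ is partitioned into $l_{i+1}$ integer subintervals of equal cardinality, and $\Lambda_{i+1}$ is the set of all these subintervals over all $I\in\Lambda_i$. For $0<j\le k$ and $J\in\Lambda_j$, $J^-$ denotes the unique $I\in\Lambda_{j-1}$ with $J\subset I$; sums $\sum_{J^-=I}$ range over the children of $I$. *)

theory Defs
  imports Complex_Main
begin

text \<open>Lengths are given by a function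
  l :: nat => nat (only l 1, ..., l k matter). Level 0 is {[L]} with [L] = {1..L};
  each interval of level i (whose cardinality is the product of l (i+1) ... l k) is cut into
  l (i+1) consecutive integer subintervals of equal cardinality (product of l (i+2) ... l k).\<close>

fun tree_level :: "(nat \<Rightarrow> nat) \<Rightarrow> nat \<Rightarrow> nat \<Rightarrow> nat set set" where
  "tree_level l k 0 = {{1..(\<Prod>j\<in>{1..k}. l j)}}"
| "tree_level l k (Suc i) =
     (let c = (\<Prod>j\<in>{Suc (Suc i)..k}. l j) in
      (\<Union>I\<in>tree_level l k i.
         {{Min I + m * c ..< Min I + Suc m * c} | m. m < l (Suc i)}))"

definition interval_tree :: "(nat \<Rightarrow> nat) \<Rightarrow> nat \<Rightarrow> nat set set" where
  "interval_tree l k = (\<Union>i\<in>{0..k}. tree_level l k i)"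

text \<open>Children J (with J^- = I) of an interval I of level i: the intervals of level i+1
  contained in I.\<close>
definition tree_children :: "(nat \<Rightarrow> nat) \<Rightarrow> nat \<Rightarrow> nat \<Rightarrow> nat set \<Rightarrow> nat set set" where
  "tree_children l k i I = {J \<in> tree_level l k (Suc i). J \<subseteq> I}"

end

theory Submission
  imports Defs "HOL-Analysis.Convex"
begin

(*
  Let N be the number of intervals of level d and, for such an interval I, let
  cap I = (Theta^p l_(d+1)^(p-1) sum_(J^- = I) s_J^p)^(1/p). Hypothesis (iii) gives
  r_I <= (1 + eta) cap I, and (ii) with the power mean inequality gives Theta s_I <= cap I.
  Summing (ii) down to level d yields r_[L] <= (1 + eta) sum_I cap I, whereas (iv) gives
  r_[L] > (1 - eta) N Y with Y the p-power mean of the caps. So the arithmetic mean of the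
  caps almost equals their p-power mean, and a quantitative Bernoulli inequality forces
  cap I <= (1 + eps) Y for every I. Hence an interval with C descendants on level d has
  r_I and Theta s_I at most C alpha Y, where alpha = (1 + eta)(1 + eps); since the other
  intervals of its level cannot make up the total (1 - eta) N Y, also r_I > C gamma Y.
  For small eta and eps the ratio gamma / alpha is as close to 1 as both conclusions need.
*)

section \<open>Bernoulli and power mean inequalities\<close>

lemma powr_le_imp_le_base:
  fixes x y a :: real
  assumes "x powr a \<le> y powr a" "0 < a" "0 \<le> y"
  shows "x \<le> y"
  using assms powr_less_mono2[of a y x] by linarith

lemma powr_less_imp_less_base:
  fixes x y a :: real
  assumes "x powr a < y powr a" "0 \<le> a" "0 \<le> y"
  shows "x < y"
  using assms powr_mono2[of a y x] by linarith

lemma bernoulli_powr: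
  fixes t p :: real
  assumes "0 \<le> t" "1 \<le> p"
  shows "1 + p * (t - 1) \<le> t powr p"
proof (cases "t = 0 \<or> p = 1")
  case True
  then show ?thesis using assms by auto
next
  case False
  then have t: "0 < t" and p: "1 < p" using assms by auto
  have "(t powr p) powr (1 / p) * 1 powr (1 - 1 / p) \<le> 1 / p * t powr p + (1 - 1 / p) * 1"
    by (rule Youngs_inequality_0) (use t p in auto)
  then have "t \<le> 1 / p * t powr p + (1 - 1 / p)"
    using t p by (simp add: powr_powr)
  then have "p * t \<le> p * (1 / p * t powr p + (1 - 1 / p))"
    using p by simp
  then show ?thesis
    using p by (simp add: algebra_simps)
qed

lemma powr_ge_tangent:
  fixes e t p :: real
  assumes "0 < e" "0 \<le> t" "1 \<le> p"
  shows "e powr p + p * e powr (p - 1) * (t - e) \<le> t powr p"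
proof -
  have "e powr p + p * e powr (p - 1) * (t - e) = e powr p * (1 + p * (t / e - 1))"
    using assms by (simp add: powr_diff field_simps)
  also have "\<dots> \<le> e powr p * (t / e) powr p"
    using bernoulli_powr[of "t / e" p] assms by (intro mult_left_mono) auto
  also have "\<dots> = t powr p"
    using assms by (simp add: powr_divide)
  finally show ?thesis .
qed

lemma bernoulli_powr_strict:
  fixes \<epsilon> p :: real
  assumes "0 < \<epsilon>" "1 < p"
  shows "1 + p * \<epsilon> < (1 + \<epsilon>) powr p"
proof -
  define e where "e = 1 + \<epsilon> / 2"
  have "1 < e powr (p - 1)"
    using assms powr_less_cancel_iff[of e 0 "p - 1"] by (simp add: e_def)
  then have "p * (\<epsilon> / 2) < p * e powr (p - 1) * (\<epsilon> / 2)"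
    using assms by simp
  moreover have "1 + p * (\<epsilon> / 2) \<le> e powr p"
    using bernoulli_powr[of e p] assms by (simp add: e_def)
  moreover have "e powr p + p * e powr (p - 1) * (\<epsilon> / 2) \<le> (1 + \<epsilon>) powr p"
    using powr_ge_tangent[of e "1 + \<epsilon>" p] assms by (simp add: e_def)
  ultimately show ?thesis
    by linarith
qed

lemma sum_bernoulli_powr_deficit:
  fixes t :: "'a \<Rightarrow> real"
  assumes "finite A" "\<forall>b\<in>A. 0 \<le> t b" "1 \<le> p" "0 \<le> \<epsilon>" "a \<in> A" "1 + \<epsilon> \<le> t a"
  shows "p * (\<Sum>b\<in>A. t b) + ((1 + \<epsilon>) powr p - 1 - p * \<epsilon>)
           \<le> (p - 1) * card A + (\<Sum>b\<in>A. t b powr p)"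
proof -
  define h where "h = (1 + \<epsilon>) powr p - 1 - p * \<epsilon>"
  have "p * t b + (if b = a then h else 0) \<le> p - 1 + t b powr p" if "b \<in> A" for b
  proof (cases "b = a")
    case True
    have "1 \<le> (1 + \<epsilon>) powr (p - 1)"
      using assms by (intro ge_one_powr_ge_zero) auto
    then have "p * (t a - (1 + \<epsilon>)) \<le> p * (1 + \<epsilon>) powr (p - 1) * (t a - (1 + \<epsilon>))"
      using assms by (intro mult_right_mono) auto
    then show ?thesis
      using powr_ge_tangent[of "1 + \<epsilon>" "t a" p] assms True by (simp add: h_def algebra_simps)
  next
    case False
    then show ?thesis
      using bernoulli_powr[of "t b" p] assms that by (simp add: algebra_simps)
  qed
  then have "(\<Sum>b\<in>A. p * t b + (if b = a then h else 0)) \<le> (\<Sum>b\<in>A. p - 1 + t b powr p)"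
    by (rule sum_mono)
  then show ?thesis
    using assms by (simp add: h_def sum.distrib sum_distrib_left mult.commute)
qed

lemma powr_sum_le_card_powr_sum_powr:
  fixes f :: "'a \<Rightarrow> real"
  assumes "finite A" "\<forall>x\<in>A. 0 \<le> f x" "1 \<le> p"
  shows "(\<Sum>x\<in>A. f x) powr p \<le> real (card A) powr (p - 1) * (\<Sum>x\<in>A. f x powr p)"
proof (cases "(\<Sum>x\<in>A. f x) = 0")
  case True
  then show ?thesis using assms by (simp add: sum_nonneg)
next
  case False
  define n where "n = real (card A)"
  have n: "0 < n"
    using assms False by (auto simp: n_def card_gt_0_iff)
  define m where "m = (\<Sum>x\<in>A. f x) / n"
  have m: "0 < m"
    using False n assms by (simp add: m_def sum_nonneg order.strict_iff_order)
  have "p * (f x / m) \<le> p - 1 + (f x / m) powr p" if "x \<in> A" for x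
    using bernoulli_powr[of "f x / m" p] assms m that by (simp add: algebra_simps)
  then have "(\<Sum>x\<in>A. p * (f x / m)) \<le> (\<Sum>x\<in>A. p - 1 + (f x / m) powr p)"
    by (rule sum_mono)
  then have "p * (\<Sum>x\<in>A. f x / m) \<le> (p - 1) * n + (\<Sum>x\<in>A. (f x / m) powr p)"
    by (simp add: n_def sum.distrib sum_distrib_left mult.commute)
  moreover have "(\<Sum>x\<in>A. f x / m) = n"
    unfolding sum_divide_distrib[symmetric] using False n by (simp add: m_def)
  moreover have "(\<Sum>x\<in>A. (f x / m) powr p) = (\<Sum>x\<in>A. f x powr p) / m powr p"
    using assms m by (simp add: powr_divide sum_divide_distrib)
  ultimately have "n * m powr p \<le> (\<Sum>x\<in>A. f x powr p)"
    using m by (simp add: algebra_simps pos_le_divide_eq)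
  moreover have "(\<Sum>x\<in>A. f x) powr p = n powr (p - 1) * (n * m powr p)"
  proof -
    have "(\<Sum>x\<in>A. f x) powr p = (n * m) powr p"
      using n by (simp add: m_def)
    also have "\<dots> = n powr (p - 1) * n * m powr p"
      using n m by (simp add: powr_mult powr_diff)
    finally show ?thesis by simp
  qed
  ultimately show ?thesis
    using n by (simp add: n_def mult_left_mono)
qed

lemma powr_mean_near_equality:
  fixes x :: "'a \<Rightarrow> real" and p \<epsilon> \<eta> Y :: real
  assumes "finite A" "\<forall>b\<in>A. 0 \<le> x b" "1 \<le> p" "0 \<le> \<epsilon>" "0 \<le> \<eta>" "0 < Y"
    and powr_sum: "(\<Sum>b\<in>A. x b powr p) = real (card A) * Y powr p"
    and sum_large: "(1 - \<eta>) * real (card A) * Y < (1 + \<eta>) * (\<Sum>b\<in>A. x b)"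
    and \<eta>_small: "2 * p * real (card A) * \<eta> \<le> (1 + \<epsilon>) powr p - 1 - p * \<epsilon>"
    and "a \<in> A"
  shows "x a \<le> (1 + \<epsilon>) * Y"
proof (rule ccontr)
  assume "\<not> x a \<le> (1 + \<epsilon>) * Y"
  define h where "h = (1 + \<epsilon>) powr p - 1 - p * \<epsilon>"
  define n where "n = real (card A)"
  define S where "S = (\<Sum>b\<in>A. x b / Y)"
  have "(\<Sum>b\<in>A. (x b / Y) powr p) = n"
    using assms by (simp add: n_def powr_divide powr_sum flip: sum_divide_distrib)
  then have "p * S + h \<le> p * n"
    using sum_bernoulli_powr_deficit[of A "\<lambda>b. x b / Y" p \<epsilon> a]
      \<open>\<not> x a \<le> (1 + \<epsilon>) * Y\<close> assms
    by (simp add: S_def h_def n_def field_simps)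
  then have "(1 + \<eta>) * (p * S) \<le> (1 + \<eta>) * (p * n - h)"
    using assms by (intro mult_left_mono) auto
  moreover have "p * ((1 - \<eta>) * n) < p * ((1 + \<eta>) * S)"
  proof -
    have "(\<Sum>b\<in>A. x b) = S * Y"
      using assms by (simp add: S_def flip: sum_divide_distrib)
    then have "((1 - \<eta>) * n) * Y < ((1 + \<eta>) * S) * Y"
      using sum_large by (simp add: n_def mult.assoc)
    then show ?thesis
      using assms by (simp add: mult_less_cancel_right)
  qed
  moreover have "0 \<le> \<eta> * h"
  proof -
    have "0 \<le> 2 * p * real (card A) * \<eta>"
      using assms by simp
    then have "0 \<le> h"
      using \<eta>_small unfolding h_def by linarith
    then show ?thesis
      using assms by simp
  qed
  ultimately have "h < 2 * p * n * \<eta>"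
    by (simp add: algebra_simps)
  then show False
    using \<eta>_small by (simp add: h_def n_def)
qed

lemma Max_le_mult_Min:
  fixes f :: "'a \<Rightarrow> real"
  assumes "finite A" "A \<noteq> {}" "\<forall>a\<in>A. \<forall>b\<in>A. f a \<le> M * f b"
  shows "Max (f ` A) \<le> M * Min (f ` A)"
proof -
  have "Max (f ` A) \<in> f ` A" "Min (f ` A) \<in> f ` A"
    using assms by (simp_all add: Max_in Min_in)
  then obtain a b where "a \<in> A" "Max (f ` A) = f a" "b \<in> A" "Min (f ` A) = f b"
    by blast
  then show ?thesis
    using assms by simp
qed

section \<open>Interval trees as families of blocks\<close>

declare tree_level.simps(2)[simp del]

definition tree_width :: "(nat \<Rightarrow> nat) \<Rightarrow> nat \<Rightarrow> nat" where
  "tree_width l j = (\<Prod>i\<in>{1..j}. l i)"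

definition tree_span :: "(nat \<Rightarrow> nat) \<Rightarrow> nat \<Rightarrow> nat \<Rightarrow> nat" where
  "tree_span l k j = (\<Prod>i\<in>{Suc j..k}. l i)"

definition tree_block :: "(nat \<Rightarrow> nat) \<Rightarrow> nat \<Rightarrow> nat \<Rightarrow> nat \<Rightarrow> nat set" where
  "tree_block l k j m = {1 + m * tree_span l k j ..< 1 + Suc m * tree_span l k j}"

lemma tree_width_Suc: "tree_width l (Suc j) = tree_width l j * l (Suc j)"
  by (simp add: tree_width_def prod.cl_ivl_Suc)

lemma tree_span_Suc: "j < k \<Longrightarrow> tree_span l k j = l (Suc j) * tree_span l k (Suc j)"
  by (simp add: tree_span_def prod.atLeast_Suc_atMost)

lemma tree_span_self [simp]: "tree_span l k k = 1"
  by (simp add: tree_span_def)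

lemma tree_width_mult_span: "j \<le> k \<Longrightarrow> tree_width l j * tree_span l k j = tree_width l k"
  using prod.ub_add_nat[of 1 j l "k - j"] by (simp add: tree_width_def tree_span_def)

lemma tree_width_pos:
  assumes "\<forall>i\<in>{1..k}. 1 \<le> l i" "j \<le> k"
  shows "0 < tree_width l j"
  unfolding tree_width_def
proof (intro prod_pos)
  fix i assume "i \<in> {1..j}"
  then have "i \<in> {1..k}" using assms(2) by simp
  then show "0 < l i" using assms(1) by fastforce
qed

lemma tree_span_pos:
  assumes "\<forall>i\<in>{1..k}. 1 \<le> l i"
  shows "0 < tree_span l k j"
  unfolding tree_span_def
proof (intro prod_pos)
  fix i assume "i \<in> {Suc j..k}"
  then have "i \<in> {1..k}" by simp
  then show "0 < l i" using assms by fastforce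
qed

lemma Min_tree_block: "0 < tree_span l k j \<Longrightarrow> Min (tree_block l k j m) = 1 + m * tree_span l k j"
  unfolding tree_block_def by (rule Min_eqI) auto

lemma inj_tree_block:
  assumes "0 < tree_span l k j"
  shows "inj (tree_block l k j)"
proof
  fix a b
  assume "tree_block l k j a = tree_block l k j b"
  then have "Min (tree_block l k j a) = Min (tree_block l k j b)" by simp
  then show "a = b" using Min_tree_block[OF assms] assms by simp
qed

lemma tree_block_subdivision:
  assumes "j < k" "0 < tree_span l k j"
  shows "{Min (tree_block l k j m) + t * tree_span l k (Suc j)
          ..< Min (tree_block l k j m) + Suc t * tree_span l k (Suc j)}
           = tree_block l k (Suc j) (m * l (Suc j) + t)"
proof -
  have "Min (tree_block l k j m) = 1 + m * (l (Suc j) * tree_span l k (Suc j))"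
    using Min_tree_block[OF assms(2)] tree_span_Suc[OF assms(1)] by simp
  then show ?thesis
    by (simp add: tree_block_def algebra_simps)
qed

lemma lessThan_mult_eq_Union:
  fixes N c :: nat
  shows "{..<N * c} = (\<Union>m<N. {m * c + t | t. t < c})"
proof (intro equalityI subsetI)
  fix a assume "a \<in> {..<N * c}"
  then have "0 < c" by (cases "c = 0") auto
  with \<open>a \<in> {..<N * c}\<close> have "a div c < N" "a mod c < c" "a = a div c * c + a mod c"
    by (auto simp: less_mult_imp_div_less)
  then show "a \<in> (\<Union>m<N. {m * c + t | t. t < c})" by blast
next
  fix a assume "a \<in> (\<Union>m<N. {m * c + t | t. t < c})"
  then obtain m t where "m < N" "t < c" "a = m * c + t" by blast
  then have "a < Suc m * c" by simp
  also have "\<dots> \<le> N * c" using \<open>m < N\<close> by (intro mult_le_mono1) simp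
  finally show "a \<in> {..<N * c}" by simp
qed

lemma tree_level_eq_blocks:
  assumes "\<forall>i\<in>{1..k}. 1 \<le> l i" "j \<le> k"
  shows "tree_level l k j = tree_block l k j ` {..<tree_width l j}"
  using assms(2)
proof (induction j)
  case 0
  then show ?case
    by (simp add: tree_block_def tree_span_def tree_width_def lessThan_Suc
        atLeastLessThanSuc_atLeastAtMost)
next
  case (Suc j)
  have jk: "j < k" using Suc by simp
  have span_pos: "0 < tree_span l k j" using tree_span_pos[OF assms(1)] .
  have "tree_level l k (Suc j) = (\<Union>m<tree_width l j.
      {{Min (tree_block l k j m) + t * tree_span l k (Suc j) ..< Min (tree_block l k j m) + Suc t * tree_span l k (Suc j)}
        | t. t < l (Suc j)})"
    using Suc by (simp add: tree_level.simps(2) tree_span_def)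
  also have "\<dots> = (\<Union>m<tree_width l j. {tree_block l k (Suc j) (m * l (Suc j) + t) | t. t < l (Suc j)})"
    unfolding tree_block_subdivision[OF jk span_pos] ..
  also have "\<dots> = tree_block l k (Suc j) ` {..<tree_width l (Suc j)}"
    unfolding tree_width_Suc lessThan_mult_eq_Union by blast
  finally show ?case .
qed

lemma tree_children_block:
  assumes "\<forall>i\<in>{1..k}. 1 \<le> l i" "j < k" "m < tree_width l j"
  shows "tree_children l k j (tree_block l k j m)
           = tree_block l k (Suc j) ` {m * l (Suc j) ..< m * l (Suc j) + l (Suc j)}"
proof -
  define c where "c = tree_span l k (Suc j)"
  have c: "0 < c" "tree_span l k j = l (Suc j) * c"
    using tree_span_pos[OF assms(1)] tree_span_Suc[OF assms(2)] by (auto simp: c_def)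
  have level: "tree_level l k (Suc j) = tree_block l k (Suc j) ` {..<tree_width l j * l (Suc j)}"
    using tree_level_eq_blocks[OF assms(1), of "Suc j"] assms(2) by (simp add: tree_width_Suc)
  have sub: "tree_block l k (Suc j) a \<subseteq> tree_block l k j m
              \<longleftrightarrow> a \<in> {m * l (Suc j) ..< m * l (Suc j) + l (Suc j)}" for a
  proof -
    have "tree_block l k (Suc j) a \<subseteq> tree_block l k j m \<longleftrightarrow>
          m * l (Suc j) * c \<le> a * c \<and> Suc a * c \<le> Suc m * l (Suc j) * c"
      unfolding tree_block_def c_def[symmetric] c(2) ivl_subset using c(1) by (simp add: algebra_simps)
    also have "\<dots> \<longleftrightarrow> m * l (Suc j) \<le> a \<and> Suc a \<le> Suc m * l (Suc j)"
      using c mult_le_cancel2[of "Suc a" c "Suc m * l (Suc j)"] by simp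
    finally show ?thesis by auto
  qed
  have bound: "a < tree_width l j * l (Suc j)" if "a < m * l (Suc j) + l (Suc j)" for a
  proof -
    have "a < Suc m * l (Suc j)" using that by simp
    also have "\<dots> \<le> tree_width l j * l (Suc j)" using assms(3) by (intro mult_le_mono1) simp
    finally show ?thesis .
  qed
  show ?thesis
    unfolding tree_children_def level
  proof (intro equalityI subsetI)
    fix J
    assume "J \<in> {J \<in> tree_block l k (Suc j) ` {..<tree_width l j * l (Suc j)}. J \<subseteq> tree_block l k j m}"
    then obtain a where "J = tree_block l k (Suc j) a" "J \<subseteq> tree_block l k j m" by blast
    then show "J \<in> tree_block l k (Suc j) ` {m * l (Suc j) ..< m * l (Suc j) + l (Suc j)}"
      using sub by blast
  next
    fix J
    assume "J \<in> tree_block l k (Suc j) ` {m * l (Suc j) ..< m * l (Suc j) + l (Suc j)}"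
    then obtain a where "J = tree_block l k (Suc j) a" "a \<in> {m * l (Suc j) ..< m * l (Suc j) + l (Suc j)}"
      by blast
    then show "J \<in> {J \<in> tree_block l k (Suc j) ` {..<tree_width l j * l (Suc j)}. J \<subseteq> tree_block l k j m}"
      using sub bound by auto
  qed
qed

lemma finite_tree_level: "\<forall>i\<in>{1..k}. 1 \<le> l i \<Longrightarrow> j \<le> k \<Longrightarrow> finite (tree_level l k j)"
  by (simp add: tree_level_eq_blocks)

lemma card_tree_level:
  "\<forall>i\<in>{1..k}. 1 \<le> l i \<Longrightarrow> j \<le> k \<Longrightarrow> card (tree_level l k j) = tree_width l j"
  by (simp add: tree_level_eq_blocks card_image inj_on_subset[OF inj_tree_block] tree_span_pos)

lemma tree_level_subset_interval_tree: "j \<le> k \<Longrightarrow> tree_level l k j \<subseteq> interval_tree l k"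
  unfolding interval_tree_def by auto

lemma tree_children_subset: "tree_children l k j I \<subseteq> tree_level l k (Suc j)"
  unfolding tree_children_def by auto

lemma finite_tree_children:
  "\<forall>i\<in>{1..k}. 1 \<le> l i \<Longrightarrow> j < k \<Longrightarrow> finite (tree_children l k j I)"
  using finite_subset[OF tree_children_subset finite_tree_level] by simp

lemma card_tree_children:
  assumes "\<forall>i\<in>{1..k}. 1 \<le> l i" "j < k" "I \<in> tree_level l k j"
  shows "card (tree_children l k j I) = l (Suc j)"
proof -
  obtain m where "m < tree_width l j" "I = tree_block l k j m"
    using assms tree_level_eq_blocks[OF assms(1), of j] by auto
  then show ?thesis
    using assms by (simp add: tree_children_block card_image inj_on_subset[OF inj_tree_block]
        tree_span_pos)
qed

lemma sum_tree_level_Suc: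
  assumes "\<forall>i\<in>{1..k}. 1 \<le> l i" "j < k"
  shows "(\<Sum>J\<in>tree_level l k (Suc j). f J) = (\<Sum>I\<in>tree_level l k j. \<Sum>J\<in>tree_children l k j I. f J)"
proof -
  have inj: "inj_on (tree_block l k i) A" for i A
    by (rule inj_on_subset[OF inj_tree_block[OF tree_span_pos[OF assms(1)]]]) simp
  have "(\<Sum>J\<in>tree_level l k (Suc j). f J) = (\<Sum>a<tree_width l j * l (Suc j). f (tree_block l k (Suc j) a))"
    using assms by (simp add: tree_level_eq_blocks tree_width_Suc sum.reindex[OF inj])
  also have "\<dots> = (\<Sum>m<tree_width l j. \<Sum>a\<in>{m * l (Suc j) ..< m * l (Suc j) + l (Suc j)}.
                      f (tree_block l k (Suc j) a))"
    by (simp add: sum.nat_group)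
  also have "\<dots> = (\<Sum>m<tree_width l j. \<Sum>J\<in>tree_children l k j (tree_block l k j m). f J)"
    using assms by (simp add: tree_children_block sum.reindex[OF inj])
  also have "\<dots> = (\<Sum>I\<in>tree_level l k j. \<Sum>J\<in>tree_children l k j I. f J)"
    using assms by (simp add: tree_level_eq_blocks sum.reindex[OF inj])
  finally show ?thesis .
qed

lemma root_le_sum_tree_level:
  fixes f :: "nat set \<Rightarrow> 'a::ordered_comm_monoid_add"
  assumes "\<forall>i\<in>{1..k}. 1 \<le> l i" "j \<le> k"
    and "\<forall>i<j. \<forall>I\<in>tree_level l k i. f I \<le> (\<Sum>J\<in>tree_children l k i I. f J)"
  shows "f {1..\<Prod>i\<in>{1..k}. l i} \<le> (\<Sum>I\<in>tree_level l k j. f I)"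
  using assms(2,3)
proof (induction j)
  case 0
  then show ?case by simp
next
  case (Suc j)
  then have "f {1..\<Prod>i\<in>{1..k}. l i} \<le> (\<Sum>I\<in>tree_level l k j. f I)"
    by simp
  also have "\<dots> \<le> (\<Sum>I\<in>tree_level l k j. \<Sum>J\<in>tree_children l k j I. f J)"
    using Suc.prems by (intro sum_mono) simp
  also have "\<dots> = (\<Sum>J\<in>tree_level l k (Suc j). f J)"
    using Suc.prems assms(1) by (simp add: sum_tree_level_Suc)
  finally show ?case .
qed

text \<open>\<open>tree_span l d j\<close> is the number of descendants on level \<open>d\<close> of an interval
  of level \<open>j\<close>.\<close>

lemma tree_level_le_span_mult:
  fixes f :: "nat set \<Rightarrow> real"
  assumes "\<forall>i\<in>{1..k}. 1 \<le> l i" "d \<le> k"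
    and "\<forall>i<d. \<forall>I\<in>tree_level l k i. f I \<le> (\<Sum>J\<in>tree_children l k i I. f J)"
    and "\<forall>J\<in>tree_level l k d. f J \<le> b"
    and "j \<le> d" "I \<in> tree_level l k j"
  shows "f I \<le> real (tree_span l d j) * b"
  using assms(5,6)
proof (induction j arbitrary: I rule: inc_induct)
  case base
  then show ?case using assms(4) by simp
next
  case (step j)
  then have "f I \<le> (\<Sum>J\<in>tree_children l k j I. f J)"
    using assms(3) by simp
  also have "\<dots> \<le> (\<Sum>J\<in>tree_children l k j I. real (tree_span l d (Suc j)) * b)"
    using step tree_children_subset by (intro sum_mono) blast
  also have "\<dots> = real (tree_span l d j) * b"
    using step assms by (simp add: card_tree_children tree_span_Suc)
  finally show ?case .
qed

section \<open>Nearly extremal trees\<close>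

locale near_extremal_tree =
  fixes p \<Theta> lam \<eta> \<epsilon> :: real and d :: nat and l :: "nat \<Rightarrow> nat" and r s :: "nat set \<Rightarrow> real"
  assumes p: "1 < p"
    and lengths_pos: "\<forall>i\<in>{1..Suc d}. 1 \<le> l i"
    and \<Theta>_pos: "0 < \<Theta>" and lam_pos: "0 < lam"
    and \<eta>: "0 \<le> \<eta>" "\<eta> < 1" and \<epsilon>: "0 \<le> \<epsilon>"
    and \<eta>_\<epsilon>: "2 * p * real (tree_width l d) * \<eta> \<le> (1 + \<epsilon>) powr p - 1 - p * \<epsilon>"
    and nonneg: "\<forall>I\<in>interval_tree l (Suc d). 0 \<le> r I \<and> 0 \<le> s I"
    and r_le_lam_s: "\<forall>I\<in>interval_tree l (Suc d). r I \<le> lam * s I"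
    and subadditive: "\<forall>i\<le>d. \<forall>I\<in>tree_level l (Suc d) i.
      r I \<le> (\<Sum>J\<in>tree_children l (Suc d) i I. r J)
      \<and> s I \<le> (\<Sum>J\<in>tree_children l (Suc d) i I. s J)"
    and top_level: "\<forall>I\<in>tree_level l (Suc d) d. r I powr p \<le> (1 + \<eta>) * \<Theta> powr p
      * real (l (Suc d)) powr (p - 1) * (\<Sum>J\<in>tree_children l (Suc d) d I. s J powr p)"
    and root: "r {1..\<Prod>i\<in>{1..Suc d}. l i} powr p > (1 - \<eta>) * \<Theta> powr p
      * (\<Prod>i\<in>{1..Suc d}. real (l i) powr (p - 1)) * (\<Sum>I\<in>tree_level l (Suc d) (Suc d). s I powr p)"
begin

abbreviation level :: "nat \<Rightarrow> nat set set" where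
  "level \<equiv> tree_level l (Suc d)"

abbreviation children :: "nat \<Rightarrow> nat set \<Rightarrow> nat set set" where
  "children \<equiv> tree_children l (Suc d)"

abbreviation root_value :: real where
  "root_value \<equiv> r {1..\<Prod>i\<in>{1..Suc d}. l i}"

definition cap :: "nat set \<Rightarrow> real" where
  "cap I = (\<Theta> powr p * real (l (Suc d)) powr (p - 1) * (\<Sum>J\<in>children d I. s J powr p)) powr (1 / p)"

definition mean_cap :: real where
  "mean_cap = ((\<Sum>I\<in>level d. cap I powr p) / tree_width l d) powr (1 / p)"

definition \<alpha> :: real where
  "\<alpha> = (1 + \<eta>) * (1 + \<epsilon>)"

definition \<gamma> :: real where
  "\<gamma> = (1 - \<eta>) * tree_width l d - (real (tree_width l d) - 1) * \<alpha>"

lemma nonneg_level: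
  assumes "j \<le> Suc d" "I \<in> level j"
  shows "0 \<le> r I" "0 \<le> s I" "r I \<le> lam * s I"
  using assms nonneg r_le_lam_s tree_level_subset_interval_tree[of j "Suc d" l] by auto

lemma level_width_pos: "j \<le> Suc d \<Longrightarrow> 0 < tree_width l j"
  using lengths_pos by (rule tree_width_pos)

lemma span_pos: "0 < tree_span l d j"
  using lengths_pos by (intro tree_span_pos) auto

lemma cap_powr: "cap I powr p = \<Theta> powr p * real (l (Suc d)) powr (p - 1) * (\<Sum>J\<in>children d I. s J powr p)"
  unfolding cap_def using p by (simp add: powr_powr sum_nonneg)

lemma r_le_cap:
  assumes "I \<in> level d"
  shows "r I \<le> (1 + \<eta>) * cap I"
proof -
  have "r I powr p \<le> (1 + \<eta>) * cap I powr p"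
    using top_level assms by (simp add: cap_powr mult.assoc)
  also have "\<dots> \<le> (1 + \<eta>) powr p * cap I powr p"
    using powr_mono[of 1 p "1 + \<eta>"] p \<eta> by (intro mult_right_mono) auto
  also have "\<dots> = ((1 + \<eta>) * cap I) powr p"
    using \<eta> by (simp add: powr_mult cap_def)
  finally show ?thesis
    by (rule powr_le_imp_le_base) (use p \<eta> in \<open>simp_all add: cap_def\<close>)
qed

lemma s_le_cap:
  assumes "I \<in> level d"
  shows "\<Theta> * s I \<le> cap I"
proof -
  have children_nonneg: "\<forall>J\<in>children d I. 0 \<le> s J"
    using tree_children_subset nonneg_level(2)[of "Suc d"] by blast
  have children: "finite (children d I)" "card (children d I) = l (Suc d)"
    using assms lengths_pos by (simp_all add: finite_tree_children card_tree_children)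
  have "s I powr p \<le> (\<Sum>J\<in>children d I. s J) powr p"
    using subadditive assms nonneg_level[of d I] p by (intro powr_mono2) auto
  also have "\<dots> \<le> real (l (Suc d)) powr (p - 1) * (\<Sum>J\<in>children d I. s J powr p)"
    using powr_sum_le_card_powr_sum_powr[of "children d I" s p] children children_nonneg p by simp
  finally have "(\<Theta> * s I) powr p \<le> cap I powr p"
    using \<Theta>_pos nonneg_level[of d I] assms
    by (simp add: cap_powr powr_mult mult.assoc mult_left_mono)
  then show ?thesis
    by (rule powr_le_imp_le_base) (use p in \<open>simp_all add: cap_def\<close>)
qed

lemma sum_cap_powr:
  "(\<Sum>I\<in>level d. cap I powr p)
     = \<Theta> powr p * real (l (Suc d)) powr (p - 1) * (\<Sum>J\<in>level (Suc d). s J powr p)"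
  using lengths_pos by (simp add: cap_powr sum_tree_level_Suc sum_distrib_left)

lemma sum_cap_powr_eq_mean_cap: "(\<Sum>I\<in>level d. cap I powr p) = tree_width l d * mean_cap powr p"
  using level_width_pos[of d] p by (simp add: mean_cap_def powr_powr sum_nonneg)

lemma root_value_le_sum_level: "j \<le> Suc d \<Longrightarrow> root_value \<le> (\<Sum>I\<in>level j. r I)"
  using lengths_pos subadditive by (intro root_le_sum_tree_level) auto

lemma mean_cap_lt_root_value: "(1 - \<eta>) * tree_width l d * mean_cap < root_value"
proof -
  define N where "N = real (tree_width l d)"
  have N: "0 < N" using level_width_pos[of d] by (simp add: N_def)
  have "(\<Prod>i\<in>{1..Suc d}. real (l i) powr (p - 1)) = real (tree_width l (Suc d)) powr (p - 1)"
    by (simp only: tree_width_def of_nat_prod prod_powr_distrib)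
  also have "\<dots> = N powr (p - 1) * real (l (Suc d)) powr (p - 1)"
    by (simp add: N_def tree_width_Suc powr_mult)
  finally have prod: "(\<Prod>i\<in>{1..Suc d}. real (l i) powr (p - 1))
                        = N powr (p - 1) * real (l (Suc d)) powr (p - 1)" .
  have "((1 - \<eta>) * N * mean_cap) powr p = (1 - \<eta>) powr p * (N powr p * mean_cap powr p)"
    using \<eta> N by (simp add: mean_cap_def powr_mult)
  also have "\<dots> \<le> (1 - \<eta>) * (N powr p * mean_cap powr p)"
    using \<eta> p by (intro mult_right_mono powr_le_one_le) auto
  also have "\<dots> = (1 - \<eta>) * N powr (p - 1) * (\<Sum>I\<in>level d. cap I powr p)"
    using N by (simp add: sum_cap_powr_eq_mean_cap N_def powr_diff)
  also have "\<dots> = (1 - \<eta>) * \<Theta> powr p * (\<Prod>i\<in>{1..Suc d}. real (l i) powr (p - 1))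
                   * (\<Sum>J\<in>level (Suc d). s J powr p)"
    unfolding sum_cap_powr prod by (simp only: ac_simps)
  also have "\<dots> < root_value powr p"
    using root .
  finally show ?thesis
    unfolding N_def[symmetric] by (rule powr_less_imp_less_base) (use p nonneg_level[of 0] in simp_all)
qed

lemma mean_cap_pos: "0 < mean_cap"
proof (rule ccontr)
  assume "\<not> 0 < mean_cap"
  then have "mean_cap = 0"
    by (simp add: mean_cap_def)
  then have "(\<Sum>I\<in>level d. cap I powr p) = 0"
    by (simp add: sum_cap_powr_eq_mean_cap)
  then have "\<forall>I\<in>level d. cap I = 0"
    using lengths_pos by (simp add: finite_tree_level sum_nonneg_eq_0_iff)
  then have "root_value \<le> 0"
    using root_value_le_sum_level[of d] r_le_cap sum_mono[of "level d" r "\<lambda>_. 0"] by fastforce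
  then show False
    using mean_cap_lt_root_value \<open>mean_cap = 0\<close> by simp
qed

lemma cap_le_mean_cap:
  assumes "I \<in> level d"
  shows "cap I \<le> (1 + \<epsilon>) * mean_cap"
proof (rule powr_mean_near_equality[of "level d" cap p \<epsilon> \<eta> mean_cap I])
  have card: "card (level d) = tree_width l d"
    using lengths_pos by (simp add: card_tree_level)
  show "(\<Sum>I\<in>level d. cap I powr p) = real (card (level d)) * mean_cap powr p"
    using card sum_cap_powr_eq_mean_cap by simp
  have "(1 - \<eta>) * tree_width l d * mean_cap < (\<Sum>I\<in>level d. r I)"
    using mean_cap_lt_root_value root_value_le_sum_level[of d] by simp
  also have "\<dots> \<le> (\<Sum>I\<in>level d. (1 + \<eta>) * cap I)"
    using r_le_cap by (rule sum_mono)
  finally show "(1 - \<eta>) * real (card (level d)) * mean_cap < (1 + \<eta>) * (\<Sum>I\<in>level d. cap I)"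
    by (simp add: card sum_distrib_left)
  show "2 * p * real (card (level d)) * \<eta> \<le> (1 + \<epsilon>) powr p - 1 - p * \<epsilon>"
    using card \<eta>_\<epsilon> by simp
qed (use assms lengths_pos p \<epsilon> \<eta> mean_cap_pos in \<open>auto simp: finite_tree_level cap_def\<close>)

lemma one_le_\<alpha>: "1 \<le> \<alpha>" and one_plus_\<epsilon>_le_\<alpha>: "1 + \<epsilon> \<le> \<alpha>"
  using \<eta> \<epsilon> by (simp_all add: \<alpha>_def algebra_simps)

lemma r_le_mean_cap:
  assumes "j \<le> d" "I \<in> level j"
  shows "r I \<le> tree_span l d j * \<alpha> * mean_cap"
proof -
  have "r J \<le> \<alpha> * mean_cap" if "J \<in> level d" for J
  proof -
    have "r J \<le> (1 + \<eta>) * cap J"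
      using that by (rule r_le_cap)
    also have "\<dots> \<le> (1 + \<eta>) * ((1 + \<epsilon>) * mean_cap)"
      using that \<eta> by (intro mult_left_mono cap_le_mean_cap) auto
    finally show ?thesis
      by (simp add: \<alpha>_def)
  qed
  then show ?thesis
    using tree_level_le_span_mult[of "Suc d" l d r "\<alpha> * mean_cap" j I] lengths_pos subadditive assms
    by (simp add: mult.assoc)
qed

lemma s_le_mean_cap:
  assumes "j \<le> d" "I \<in> level j"
  shows "\<Theta> * s I \<le> tree_span l d j * \<alpha> * mean_cap"
proof -
  have "\<Theta> * s J \<le> \<alpha> * mean_cap" if "J \<in> level d" for J
  proof -
    have "\<Theta> * s J \<le> cap J"
      using that by (rule s_le_cap)
    also have "\<dots> \<le> (1 + \<epsilon>) * mean_cap"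
      using that by (rule cap_le_mean_cap)
    also have "\<dots> \<le> \<alpha> * mean_cap"
      using one_plus_\<epsilon>_le_\<alpha> mean_cap_pos by simp
    finally show ?thesis .
  qed
  moreover have "\<Theta> * s I \<le> (\<Sum>J\<in>children i I. \<Theta> * s J)" if "i < d" "I \<in> level i" for i I
    using subadditive that \<Theta>_pos by (simp flip: sum_distrib_left)
  ultimately show ?thesis
    using tree_level_le_span_mult[of "Suc d" l d "\<lambda>I. \<Theta> * s I" "\<alpha> * mean_cap" j I] lengths_pos assms
    by (simp add: mult.assoc)
qed

lemma r_gt_mean_cap:
  assumes "j \<le> d" "I \<in> level j"
  shows "tree_span l d j * \<gamma> * mean_cap < r I"
proof -
  define N where "N = real (tree_width l d)"
  define Nj where "Nj = real (tree_width l j)"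
  define C where "C = real (tree_span l d j)"
  have NjC: "N = Nj * C"
    using tree_width_mult_span[OF assms(1), of l] by (simp add: N_def Nj_def C_def flip: of_nat_mult)
  have C: "1 \<le> C"
    using span_pos[of j] by (simp add: C_def)
  have card: "card (level j) = tree_width l j"
    using assms lengths_pos by (simp add: card_tree_level)
  have "(1 - \<eta>) * N * mean_cap < root_value"
    using mean_cap_lt_root_value by (simp add: N_def)
  also have "\<dots> \<le> (\<Sum>I\<in>level j. r I)"
    by (rule root_value_le_sum_level) (use assms in simp)
  also have "\<dots> = r I + (\<Sum>I'\<in>level j - {I}. r I')"
    using assms lengths_pos by (simp add: finite_tree_level sum.remove)
  also have "(\<Sum>I'\<in>level j - {I}. r I') \<le> (Nj - 1) * (C * \<alpha> * mean_cap)"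
    using sum_bounded_above[of "level j - {I}" r "C * \<alpha> * mean_cap"] r_le_mean_cap[of j] assms
      lengths_pos card level_width_pos[of j]
    by (simp add: C_def Nj_def finite_tree_level)
  finally have upper: "(1 - \<eta>) * N * mean_cap < r I + (Nj - 1) * (C * \<alpha> * mean_cap)"
    by simp
  have "(1 - \<eta>) * N * mean_cap - (Nj - 1) * (C * \<alpha> * mean_cap) - C * \<gamma> * mean_cap
          = (C - 1) * N * mean_cap * (\<alpha> - (1 - \<eta>))"
    unfolding \<gamma>_def N_def[symmetric] NjC by (simp add: algebra_simps)
  moreover have "0 \<le> (C - 1) * N * mean_cap * (\<alpha> - (1 - \<eta>))"
    using C one_le_\<alpha> \<eta> mean_cap_pos by (simp add: N_def)
  ultimately show ?thesis
    using upper by (simp add: C_def)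
qed

lemma s_le_mult_s:
  assumes "0 < M" "lam * \<alpha> \<le> M * \<Theta> * \<gamma>" "j \<le> d" "I \<in> level j" "I' \<in> level j"
  shows "s I \<le> M * s I'"
proof -
  define K where "K = real (tree_span l d j) * mean_cap"
  have K: "0 < K"
    using span_pos mean_cap_pos by (simp add: K_def)
  have "K * \<gamma> < r I'"
    using r_gt_mean_cap[OF assms(3,5)] by (simp add: K_def ac_simps)
  also have "\<dots> \<le> lam * s I'"
    using nonneg_level(3)[of j I'] assms by simp
  finally have lower: "K * \<gamma> < lam * s I'" .
  have "\<Theta> * (lam * s I) \<le> lam * (K * \<alpha>)"
    using s_le_mean_cap[OF assms(3,4)] lam_pos by (simp add: K_def ac_simps)
  also have "\<dots> \<le> K * (M * \<Theta> * \<gamma>)"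
    using assms(2) K by (simp add: mult.left_commute)
  also have "\<dots> \<le> M * \<Theta> * (lam * s I')"
    using lower assms(1) \<Theta>_pos by (simp add: mult.left_commute)
  finally have "(\<Theta> * lam) * s I \<le> (\<Theta> * lam) * (M * s I')"
    by (simp add: ac_simps)
  then show ?thesis
    using \<Theta>_pos lam_pos by simp
qed

lemma children_r_powr_lt:
  assumes "0 \<le> c" "c powr (1 / p) * \<alpha> \<le> \<gamma>" "i < d" "I \<in> level i"
  shows "c * real (l (Suc i)) powr (p - 1) * (\<Sum>J\<in>children i I. r J powr p) < r I powr p"
proof -
  define K where "K = real (tree_span l d (Suc i)) * \<alpha> * mean_cap"
  define li where "li = real (l (Suc i))"
  have li: "1 \<le> li"
    using lengths_pos assms(3) by (simp add: li_def)
  have K: "0 \<le> K"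
    using one_le_\<alpha> mean_cap_pos by (simp add: K_def)
  have "r J powr p \<le> K powr p" if "J \<in> children i I" for J
  proof -
    have "J \<in> level (Suc i)"
      using that tree_children_subset by blast
    then show ?thesis
      using r_le_mean_cap[of "Suc i" J] nonneg_level(1)[of "Suc i" J] assms(3) p
      by (intro powr_mono2) (simp_all add: K_def)
  qed
  then have "(\<Sum>J\<in>children i I. r J powr p) \<le> li * K powr p"
    using sum_bounded_above[of "children i I" "\<lambda>J. r J powr p" "K powr p"] assms lengths_pos
    by (simp add: card_tree_children li_def)
  then have "c * li powr (p - 1) * (\<Sum>J\<in>children i I. r J powr p) \<le> c * li powr (p - 1) * (li * K powr p)"
    using assms(1) by (intro mult_left_mono) simp_all
  also have "\<dots> = (c powr (1 / p) * li * K) powr p"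
  proof -
    have "li powr (p - 1) * li = li powr p"
      using li by (simp add: powr_diff)
    moreover have "(c powr (1 / p)) powr p = c"
      using assms(1) p by (simp add: powr_powr)
    ultimately show ?thesis
      using li K by (simp add: powr_mult ac_simps)
  qed
  also have "\<dots> < r I powr p"
  proof (rule powr_less_mono2)
    have "c powr (1 / p) * li * K = c powr (1 / p) * \<alpha> * (tree_span l d i * mean_cap)"
      using assms(3) by (simp add: K_def li_def tree_span_Suc ac_simps)
    also have "\<dots> \<le> \<gamma> * (tree_span l d i * mean_cap)"
      using assms(2) mean_cap_pos by (intro mult_right_mono) simp_all
    also have "\<dots> < r I"
      using r_gt_mean_cap[of i I] assms(3,4) by (simp add: ac_simps)
    finally show "c powr (1 / p) * li * K < r I" .
  qed (use p li K in simp_all)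
  finally show ?thesis
    by (simp add: li_def)
qed

lemma rigidity:
  fixes \<mu> M :: real
  assumes "0 < \<mu>" "\<mu> < 1" "lam / \<Theta> < M"
    and "max (lam / (M * \<Theta>)) ((1 - \<mu>) powr (1 / p)) * \<alpha> \<le> \<gamma>"
  shows "(\<forall>j\<le>d. Max (s ` level j) \<le> M * Min (s ` level j))
    \<and> (\<forall>i<d. \<forall>I\<in>level i. r I powr p > (1 - \<mu>) * real (l (Suc i)) powr (p - 1)
                              * (\<Sum>J\<in>children i I. r J powr p))"
proof (intro conjI allI impI ballI)
  have M: "0 < M"
    using less_trans[OF divide_pos_pos[OF lam_pos \<Theta>_pos] assms(3)] .
  have "lam / (M * \<Theta>) * \<alpha> \<le> \<gamma>"
    using order.trans[OF mult_right_mono[OF max.cobounded1] assms(4)] one_le_\<alpha> by simp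
  then have "lam * \<alpha> \<le> M * \<Theta> * \<gamma>"
    using M \<Theta>_pos by (simp add: field_simps)
  then have "s I \<le> M * s I'" if "j \<le> d" "I \<in> level j" "I' \<in> level j" for j I I'
    using s_le_mult_s M that by blast
  then show "Max (s ` level j) \<le> M * Min (s ` level j)" if "j \<le> d" for j
    using that lengths_pos card_tree_level[of "Suc d" l j] level_width_pos[of j]
    by (intro Max_le_mult_Min) (auto simp: finite_tree_level)
  have "(1 - \<mu>) powr (1 / p) * \<alpha> \<le> \<gamma>"
    using order.trans[OF mult_right_mono[OF max.cobounded2] assms(4)] one_le_\<alpha> by simp
  then show "(1 - \<mu>) * real (l (Suc i)) powr (p - 1) * (\<Sum>J\<in>children i I. r J powr p) < r I powr p"
    if "i < d" "I \<in> level i" for i I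
    using assms(2) that by (intro children_r_powr_lt) auto
qed

end

section \<open>Choice of the parameters\<close>

lemma small_parameters:
  fixes n :: nat and p \<tau> \<eta>1 :: real
  assumes "0 < n" "1 < p" "0 \<le> \<tau>" "\<tau> < 1" "0 < \<eta>1"
  obtains \<eta> \<epsilon> where "0 < \<eta>" "\<eta> < \<eta>1" "\<eta> < 1" "0 \<le> \<epsilon>"
    "2 * p * n * \<eta> \<le> (1 + \<epsilon>) powr p - 1 - p * \<epsilon>"
    "\<tau> * ((1 + \<eta>) * (1 + \<epsilon>)) \<le> (1 - \<eta>) * n - (real n - 1) * ((1 + \<eta>) * (1 + \<epsilon>))"
proof
  define \<epsilon> where "\<epsilon> = (1 - \<tau>) / (4 * n)"
  define h where "h = (1 + \<epsilon>) powr p - 1 - p * \<epsilon>"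
  define \<eta> where "\<eta> = min (\<eta>1 / 2) (min (1 / 2) (min ((1 - \<tau>) / (4 * n)) (h / (2 * p * n))))"
  have \<epsilon>: "0 < \<epsilon>" "\<epsilon> \<le> 1" "n * \<epsilon> = (1 - \<tau>) / 4"
    using assms by (auto simp: \<epsilon>_def field_simps)
  have "0 < h"
    using bernoulli_powr_strict[of \<epsilon> p] \<epsilon> assms by (simp add: h_def)
  then show "0 < \<eta>" "\<eta> < \<eta>1" "\<eta> < 1" "0 \<le> \<epsilon>"
    using assms \<epsilon> by (auto simp: \<eta>_def)
  have "\<eta> \<le> h / (2 * p * n)"
    by (simp add: \<eta>_def)
  then show "2 * p * n * \<eta> \<le> (1 + \<epsilon>) powr p - 1 - p * \<epsilon>"
    using assms by (simp add: h_def field_simps)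
  have "\<eta> \<le> (1 - \<tau>) / (4 * n)"
    by (simp add: \<eta>_def)
  then have n\<eta>: "n * \<eta> \<le> (1 - \<tau>) / 4"
    using assms by (simp add: field_simps)
  have "\<eta> * \<epsilon> \<le> \<eta>"
    using \<epsilon> \<open>0 < \<eta>\<close> by (simp add: mult_left_le)
  then have \<alpha>: "(1 + \<eta>) * (1 + \<epsilon>) \<le> 1 + (\<epsilon> + 2 * \<eta>)"
    by (simp add: algebra_simps)
  have "(real n - 1 + \<tau>) * ((1 + \<eta>) * (1 + \<epsilon>)) \<le> (real n - 1 + \<tau>) * (1 + (\<epsilon> + 2 * \<eta>))"
    using \<alpha> assms by (intro mult_left_mono) auto
  also have "\<dots> = (real n - 1 + \<tau>) + (real n - 1 + \<tau>) * (\<epsilon> + 2 * \<eta>)"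
    by (simp add: distrib_left)
  also have "\<dots> \<le> (real n - 1 + \<tau>) + n * (\<epsilon> + 2 * \<eta>)"
    using assms \<epsilon> \<open>0 < \<eta>\<close> by (intro add_left_mono mult_right_mono) auto
  also have "\<dots> \<le> (1 - \<eta>) * n"
    using \<epsilon> n\<eta> by (simp add: algebra_simps)
  finally show "\<tau> * ((1 + \<eta>) * (1 + \<epsilon>)) \<le> (1 - \<eta>) * n - (real n - 1) * ((1 + \<eta>) * (1 + \<epsilon>))"
    by (simp add: algebra_simps)
qed

theorem lemma3p4:
  fixes p \<mu> lam \<Theta> M :: real and d :: nat and l :: "nat \<Rightarrow> nat"
  assumes "1 < p"
    and "\<forall>i\<in>{1..d}. 1 \<le> l i"
    and "0 < \<mu>" and "\<mu> < 1" and "0 < lam" and "0 < \<Theta>" and "M > lam / \<Theta>"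
  shows "\<forall>\<eta>1::real. 0 < \<eta>1 \<and> \<eta>1 < 1 \<longrightarrow>
    (\<exists>\<eta>::real. 0 < \<eta> \<and> \<eta> < \<eta>1 \<and>
      (\<forall>(ld1::nat) (r::nat set \<Rightarrow> real) (s::nat set \<Rightarrow> real).
        let lt = l(Suc d := ld1);
            k = Suc d;
            \<Lambda> = tree_level lt k;
            ch = tree_children lt k;
            L = (\<Prod>i\<in>{1..k}. lt i)
        in
        (1 \<le> ld1
         \<and> (\<forall>I\<in>interval_tree lt k. 0 \<le> r I \<and> 0 \<le> s I)
         \<and> (\<forall>I\<in>interval_tree lt k. r I \<le> lam * s I)
         \<and> (\<forall>i\<le>d. \<forall>I\<in>\<Lambda> i. r I \<le> (\<Sum>J\<in>ch i I. r J) \<and> s I \<le> (\<Sum>J\<in>ch i I. s J))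
         \<and> (\<forall>I\<in>\<Lambda> d. r I powr p \<le> (1 + \<eta>) * \<Theta> powr p * real ld1 powr (p - 1)
                                     * (\<Sum>J\<in>ch d I. s J powr p))
         \<and> r {1..L} powr p > (1 - \<eta>) * \<Theta> powr p * (\<Prod>i\<in>{1..k}. real (lt i) powr (p - 1))
                                * (\<Sum>I\<in>\<Lambda> k. s I powr p))
        \<longrightarrow>
        (\<forall>j\<le>d. Max (s ` \<Lambda> j) \<le> M * Min (s ` \<Lambda> j))
        \<and> (\<forall>i<d. \<forall>I1\<in>\<Lambda> i. r I1 powr p > (1 - \<mu>) * real (lt (Suc i)) powr (p - 1)
                                          * (\<Sum>J\<in>ch i I1. r J powr p))))"
  apply (intro allI impI)
  subgoal premises \<eta>1 for \<eta>1
  proof -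
    define \<tau> where "\<tau> = max (lam / (M * \<Theta>)) ((1 - \<mu>) powr (1 / p))"
    have "lam / (M * \<Theta>) < 1" "(1 - \<mu>) powr (1 / p) < 1"
      using assms powr_less_mono2[of "1 / p" "1 - \<mu>" 1] by (simp_all add: field_simps)
    then have \<tau>: "0 \<le> \<tau>" "\<tau> < 1"
      by (simp_all add: \<tau>_def le_max_iff_disj)
    obtain \<eta> \<epsilon> where params: "0 < \<eta>" "\<eta> < \<eta>1" "\<eta> < 1" "0 \<le> \<epsilon>"
      "2 * p * tree_width l d * \<eta> \<le> (1 + \<epsilon>) powr p - 1 - p * \<epsilon>"
      "\<tau> * ((1 + \<eta>) * (1 + \<epsilon>))
         \<le> (1 - \<eta>) * tree_width l d - (real (tree_width l d) - 1) * ((1 + \<eta>) * (1 + \<epsilon>))"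
      using small_parameters[of "tree_width l d" p \<tau> \<eta>1] tree_width_pos[OF assms(2)] assms \<tau> \<eta>1
      by auto
    show ?thesis
      apply (intro exI[of _ \<eta>] conjI allI params(1,2))
      unfolding Let_def
      apply (intro impI, elim conjE)
      subgoal premises hyps for ld1 r s
      proof -
        have width: "tree_width (l(Suc d := ld1)) d = tree_width l d"
          unfolding tree_width_def by (rule prod.cong) auto
        interpret near_extremal_tree p \<Theta> lam \<eta> \<epsilon> d "l(Suc d := ld1)" r s
          by unfold_locales (use assms params hyps width in auto)
        show ?thesis
          by (rule rigidity) (use assms params width in \<open>simp_all add: \<tau>_def \<alpha>_def \<gamma>_def\<close>)
      qed
      done
  qed
  done

end
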